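(* Let $k\ge 3$, $n_1=\cdots=n_k\ge 2$ and $r\in[k]$. The number of distinct isomorphism classes of graphs in the LC orbit $\mathcal{O}(CS^r_{n_1,\dots,n_k})$ is $\lceil k/2\rceil+k$.
   Context: The clique-star $CS^r_{n_1,\dots,n_k}$ has vertex set $U_1\sqcup\cdots\sqcup U_k$ with $|U_i|=n_i$; each $U_i$ is a clique, every vertex of $U_r$ is adjacent to every vertex of each $U_i$ with $i\ne r$, and there are no edges between $U_i$ and $U_l$ for distinct $i,l\ne r$. The local complement $c_v(G)$ complements the edges among the neighbours of $v$; $\mathcal{O}(G)$ is the set of all graphs on the labelled vertex set obtainable from $G$ by finite sequences of local complements. *)

theory Defs
  imports Main
begin

text \<open>A simple graph on a labelled vertex set V is represented by its symmetric,
irreflexive edge relation E, a subset of V \<times> V (each edge {x,y} appears as both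
(x,y) and (y,x)).\<close>

definition local_complement :: "'a \<Rightarrow> ('a \<times> 'a) set \<Rightarrow> ('a \<times> 'a) set" where
  "local_complement v E =
     {(x, y). ((x, y) \<in> E) \<noteq> (x \<noteq> y \<and> (v, x) \<in> E \<and> (v, y) \<in> E)}"

inductive_set lc_orbit :: "'a set \<Rightarrow> ('a \<times> 'a) set \<Rightarrow> ('a \<times> 'a) set set"
  for V E where
  base: "E \<in> lc_orbit V E"
| step: "F \<in> lc_orbit V E \<Longrightarrow> v \<in> V \<Longrightarrow> local_complement v F \<in> lc_orbit V E"

definition graph_iso :: "'a set \<Rightarrow> ('a \<times> 'a) set \<Rightarrow> ('a \<times> 'a) set \<Rightarrow> bool" where
  "graph_iso V E F \<longleftrightarrow>
     (\<exists>f. bij_betw f V V \<and> (\<forall>x\<in>V. \<forall>y\<in>V. (x, y) \<in> E \<longleftrightarrow> (f x, f y) \<in> F))"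

definition num_iso_classes :: "'a set \<Rightarrow> ('a \<times> 'a) set set \<Rightarrow> nat" where
  "num_iso_classes V S = card (S // {(E, F). E \<in> S \<and> F \<in> S \<and> graph_iso V E F})"

text \<open>Clique-star CS^r_{n_1,...,n_k}: vertices (i, j) with i \<in> {1..k}, j < n_i;
U_i = {i} \<times> {0..<n_i}.\<close>
definition cs_vertices :: "nat \<Rightarrow> (nat \<Rightarrow> nat) \<Rightarrow> (nat \<times> nat) set" where
  "cs_vertices k ns = {(i, j). i \<in> {1..k} \<and> j < ns i}"

definition clique_star :: "nat \<Rightarrow> (nat \<Rightarrow> nat) \<Rightarrow> nat \<Rightarrow> ((nat \<times> nat) \<times> (nat \<times> nat)) set" where
  "clique_star k ns r =
     {((i, j), (i', j')). (i, j) \<in> cs_vertices k ns \<and> (i', j') \<in> cs_vertices k ns \<and>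
        (i, j) \<noteq> (i', j') \<and> (i = i' \<or> i = r \<or> i' = r)}"

end

theory Submission
  imports Defs "HOL-Combinatorics.Transposition"
begin

text \<open>
Local complementation keeps the orbit of the clique-star inside two explicit families of graphs on
the blocks U_1, ..., U_k. In both, some blocks are decorated: one vertex of a decorated block is
distinguished and the other n - 1 vertices are pendants attached to it. In a star form a centre
block, which is a clique or an independent set according to the parity of the number of decorated
blocks, is joined to all non-pendant vertices of the other blocks, and undecorated blocks are
cliques; in a multipartite form (which always has an odd number of decorated blocks) the non-pendant
vertices form a complete multipartite graph. Permuting the blocks, and the vertices inside each
block, shows that a form is determined up to isomorphism by its family and its number of decorated
blocks, which is the number of pendants divided by n - 1. The families are told apart by an
isomorphism invariant: in every multipartite form, and in no star form, some neighbour of a pendant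
is adjacent to all other non-pendant vertices. The orbit contains star forms with 0, ..., k - 1
decorated blocks and multipartite forms with every odd number of at most k decorated blocks, giving
k + ceil(k/2) classes.
\<close>

section \<open>Pendants, local complements and an isomorphism invariant\<close>

definition neighbours :: "('a \<times> 'a) set \<Rightarrow> 'a \<Rightarrow> 'a set" where
  "neighbours E x = {y. (x, y) \<in> E}"

definition pendants :: "'a set \<Rightarrow> ('a \<times> 'a) set \<Rightarrow> 'a set" where
  "pendants V E = {x \<in> V. card (neighbours E x) = 1}"

definition is_dominating_support :: "'a set \<Rightarrow> ('a \<times> 'a) set \<Rightarrow> 'a \<Rightarrow> bool" where
  "is_dominating_support V E x \<longleftrightarrow>
     (\<exists>z\<in>pendants V E. (x, z) \<in> E) \<and> (\<forall>y\<in>V - pendants V E. y \<noteq> x \<longrightarrow> (x, y) \<in> E)"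

definition pendant_signature :: "'a set \<Rightarrow> ('a \<times> 'a) set \<Rightarrow> bool \<times> nat" where
  "pendant_signature V E = ((\<exists>x\<in>V. is_dominating_support V E x), card (pendants V E))"

lemma mem_local_complement:
  "(x, y) \<in> local_complement v E \<longleftrightarrow> ((x, y) \<in> E) \<noteq> (x \<noteq> y \<and> (v, x) \<in> E \<and> (v, y) \<in> E)"
  by (simp add: local_complement_def)

lemma local_complement_eq_self:
  assumes "neighbours E v \<subseteq> {u}"
  shows "local_complement v E = E"
  using assms by (auto simp: local_complement_def neighbours_def)

lemma card_neighbours_eq_1:
  assumes "neighbours E x \<subseteq> {y}" "(x, y) \<in> E"
  shows "card (neighbours E x) = 1"
proof -
  have "neighbours E x = {y}"
    using assms by (auto simp: neighbours_def)
  then show ?thesis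
    by simp
qed

lemma card_neighbours_ne_1:
  assumes "(x, y) \<in> E" "(x, z) \<in> E" "y \<noteq> z"
  shows "card (neighbours E x) \<noteq> 1"
  using assms by (metis card_1_singletonE mem_Collect_eq neighbours_def singletonD)

locale graph_isomorphism =
  fixes V :: "'a set" and E F :: "('a \<times> 'a) set" and f :: "'a \<Rightarrow> 'a"
  assumes bij: "bij_betw f V V"
    and edge_iff: "\<And>x y. x \<in> V \<Longrightarrow> y \<in> V \<Longrightarrow> (x, y) \<in> E \<longleftrightarrow> (f x, f y) \<in> F"
    and E_subset: "E \<subseteq> V \<times> V" and F_subset: "F \<subseteq> V \<times> V"
begin

lemma inj: "inj_on f V" and image_eq: "f ` V = V"
  using bij by (auto simp: bij_betw_def)

lemma neighbours_image:
  assumes "x \<in> V"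
  shows "neighbours F (f x) = f ` neighbours E x"
proof
  show "f ` neighbours E x \<subseteq> neighbours F (f x)"
    using assms E_subset edge_iff by (auto simp: neighbours_def)
  show "neighbours F (f x) \<subseteq> f ` neighbours E x"
  proof
    fix y assume y: "y \<in> neighbours F (f x)"
    then have "y \<in> f ` V"
      using F_subset image_eq by (auto simp: neighbours_def)
    with y show "y \<in> f ` neighbours E x"
      using assms edge_iff by (auto simp: neighbours_def)
  qed
qed

lemma pendants_image: "pendants V F = f ` pendants V E"
proof -
  have pendant_iff: "f x \<in> pendants V F \<longleftrightarrow> x \<in> pendants V E" if "x \<in> V" for x
  proof -
    have "inj_on f (neighbours E x)"
      by (rule inj_on_subset[OF inj]) (use E_subset in \<open>auto simp: neighbours_def\<close>)
    then show ?thesis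
      using that neighbours_image[OF that] bij_betwE[OF bij] by (simp add: pendants_def card_image)
  qed
  have pendants_subset: "pendants V G \<subseteq> V" for G
    by (auto simp: pendants_def)
  show ?thesis
  proof
    show "f ` pendants V E \<subseteq> pendants V F"
      using pendant_iff pendants_subset by blast
    show "pendants V F \<subseteq> f ` pendants V E"
    proof
      fix y assume y: "y \<in> pendants V F"
      then obtain x where "x \<in> V" "y = f x"
        using pendants_subset image_eq by blast
      with y show "y \<in> f ` pendants V E"
        using pendant_iff by blast
    qed
  qed
qed

lemma is_dominating_support_image:
  assumes "x \<in> V"
  shows "is_dominating_support V F (f x) \<longleftrightarrow> is_dominating_support V E x"
proof -
  have pendants_subset: "pendants V E \<subseteq> V"
    by (auto simp: pendants_def)
  then have "V - pendants V F = f ` (V - pendants V E)"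
    unfolding pendants_image using inj_on_image_set_diff[OF inj] image_eq by simp
  then have "(\<forall>y\<in>V - pendants V F. y \<noteq> f x \<longrightarrow> (f x, y) \<in> F) \<longleftrightarrow>
      (\<forall>y\<in>V - pendants V E. y \<noteq> x \<longrightarrow> (x, y) \<in> E)"
    using assms edge_iff inj by (auto simp: inj_on_eq_iff)
  moreover have "(\<exists>z\<in>pendants V F. (f x, z) \<in> F) \<longleftrightarrow> (\<exists>z\<in>pendants V E. (x, z) \<in> E)"
    unfolding pendants_image using assms edge_iff pendants_subset by blast
  ultimately show ?thesis
    by (simp add: is_dominating_support_def)
qed

lemma pendant_signature_eq: "pendant_signature V E = pendant_signature V F"
proof -
  have "card (pendants V F) = card (pendants V E)"
    unfolding pendants_image by (rule card_image, rule inj_on_subset[OF inj]) (auto simp: pendants_def)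
  moreover have "(\<exists>x\<in>V. is_dominating_support V F x) \<longleftrightarrow> (\<exists>x\<in>f ` V. is_dominating_support V F x)"
    using image_eq by simp
  ultimately show ?thesis
    using is_dominating_support_image by (auto simp: pendant_signature_def)
qed

end

lemma graph_iso_pendant_signature:
  assumes "graph_iso V E F" "E \<subseteq> V \<times> V" "F \<subseteq> V \<times> V"
  shows "pendant_signature V E = pendant_signature V F"
proof -
  obtain f where "graph_isomorphism V E F f"
    using assms unfolding graph_iso_def graph_isomorphism_def by blast
  then show ?thesis
    by (rule graph_isomorphism.pendant_signature_eq)
qed

lemma card_quotient_eq_card_image:
  assumes "\<And>x y. x \<in> A \<Longrightarrow> y \<in> A \<Longrightarrow> R x y \<longleftrightarrow> g x = g y"
  shows "card (A // {(x, y). x \<in> A \<and> y \<in> A \<and> R x y}) = card (g ` A)"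
proof -
  let ?R = "{(x, y). x \<in> A \<and> y \<in> A \<and> R x y}"
  have "A // ?R = (\<lambda>x. ?R `` {x}) ` A"
    by (auto simp: quotient_def)
  also have "\<dots> = (\<lambda>x. {y \<in> A. g y = g x}) ` A"
    using assms by (intro image_cong) auto
  also have "\<dots> = (\<lambda>v. {x \<in> A. g x = v}) ` g ` A"
    by (simp add: image_image)
  finally have "A // ?R = (\<lambda>v. {x \<in> A. g x = v}) ` g ` A" .
  moreover have "inj_on (\<lambda>v. {x \<in> A. g x = v}) (g ` A)"
    by (auto simp: inj_on_def)
  ultimately show ?thesis
    by (simp add: card_image)
qed

section \<open>Relabelling the blocks of the clique-star\<close>

lemma obtain_bij_betw_image_eq:
  assumes "finite U" "finite U'" "card U = card U'" "A \<subseteq> U" "B \<subseteq> U'" "card A = card B"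
  obtains f where "bij_betw f U U'" "f ` A = B"
proof -
  have "finite A" "finite B"
    using assms finite_subset by auto
  then obtain g where g: "bij_betw g A B"
    using \<open>card A = card B\<close> finite_same_card_bij by blast
  have "card (U - A) = card (U' - B)"
    using assms \<open>finite A\<close> \<open>finite B\<close> by (simp add: card_Diff_subset)
  then obtain h where h: "bij_betw h (U - A) (U' - B)"
    using assms finite_same_card_bij by (meson finite_Diff)
  define f where "f x = (if x \<in> A then g x else h x)" for x
  have "bij_betw f A B"
    using g by (rule bij_betw_cong[THEN iffD1, rotated]) (simp add: f_def)
  moreover have "bij_betw f (U - A) (U' - B)"
    using h by (rule bij_betw_cong[THEN iffD1, rotated]) (simp add: f_def)
  ultimately have "bij_betw f (A \<union> (U - A)) (B \<union> (U' - B))"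
    by (rule bij_betw_combine) auto
  moreover have "A \<union> (U - A) = U" "B \<union> (U' - B) = U'"
    using assms by auto
  ultimately show ?thesis
    using that \<open>bij_betw f A B\<close> bij_betw_imp_surj_on by metis
qed

lemma obtain_bij_betw_point_image_eq:
  assumes "finite U" "finite U'" "card U = card U'" "a \<in> U" "b \<in> U'"
    and "A \<subseteq> U - {a}" "B \<subseteq> U' - {b}" "card A = card B"
  obtains f where "bij_betw f U U'" "f a = b" "f ` A = B"
proof -
  have "card (U - {a}) = card (U' - {b})"
    using assms by simp
  then obtain g where g: "bij_betw g (U - {a}) (U' - {b})" and gA: "g ` A = B"
    using obtain_bij_betw_image_eq[of "U - {a}" "U' - {b}" A B] assms by auto
  define f where "f = g(a := b)"
  have "bij_betw f (U - {a}) (U' - {b})"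
    using g by (rule bij_betw_cong[THEN iffD1, rotated]) (simp add: f_def)
  then have "bij_betw f (U - {a} \<union> {a}) (U' - {b} \<union> {f a})"
    using notIn_Un_bij_betw3[of a "U - {a}" f "U' - {b}"] by (simp add: f_def)
  moreover have "U - {a} \<union> {a} = U" "U' - {b} \<union> {f a} = U'"
    using assms by (auto simp: f_def)
  moreover have "f ` A = B"
    using gA assms(6) by (auto simp: f_def)
  ultimately show ?thesis
    using that by (simp add: f_def)
qed

lemma transpose_less:
  fixes a b j n :: nat
  shows "a < n \<Longrightarrow> b < n \<Longrightarrow> j < n \<Longrightarrow> transpose a b j < n"
  by (simp add: transpose_def)

lemma mem_cs_vertices [simp]: "(i, j) \<in> cs_vertices k (\<lambda>_. n) \<longleftrightarrow> i \<in> {1..k} \<and> j < n"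
  by (simp add: cs_vertices_def)

lemma finite_cs_vertices: "finite (cs_vertices k ns)"
proof -
  have "cs_vertices k ns = (SIGMA i:{1..k}. {..<ns i})"
    by (auto simp: cs_vertices_def)
  then show ?thesis
    by simp
qed

lemma obtain_third_block:
  fixes k a b :: nat
  assumes "k \<ge> 3"
  obtains c where "c \<in> {1..k}" "c \<noteq> a" "c \<noteq> b"
  using assms that[of 1] that[of 2] that[of 3]
  by (cases "a = 1 \<or> b = 1"; cases "a = 2 \<or> b = 2") auto

lemma graph_iso_blockwise:
  assumes \<pi>: "bij_betw \<pi> {1..k} {1..k}" and \<sigma>: "\<And>i. inj (\<sigma> i)" "\<And>i j. j < n \<Longrightarrow> \<sigma> i j < n"
    and edges: "\<And>i j i' j'. i \<in> {1..k} \<Longrightarrow> j < n \<Longrightarrow> i' \<in> {1..k} \<Longrightarrow> j' < n \<Longrightarrow>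
      ((i, j), (i', j')) \<in> E \<longleftrightarrow> ((\<pi> i, \<sigma> i j), (\<pi> i', \<sigma> i' j')) \<in> F"
  shows "graph_iso (cs_vertices k (\<lambda>_. n)) E F"
proof -
  let ?V = "cs_vertices k (\<lambda>_. n)" and ?f = "\<lambda>(i, j). (\<pi> i, \<sigma> i j)"
  have "inj_on ?f ?V"
  proof (rule inj_onI)
    fix x y assume "x \<in> ?V" "y \<in> ?V" "?f x = ?f y"
    then show "x = y"
      using bij_betw_imp_inj_on[OF \<pi>] \<sigma>(1) by (cases x, cases y) (auto simp: inj_on_eq_iff inj_eq)
  qed
  moreover have "?f ` ?V \<subseteq> ?V"
    using bij_betwE[OF \<pi>] \<sigma>(2) by auto
  ultimately have "bij_betw ?f ?V ?V"
    by (simp add: bij_betw_def endo_inj_surj finite_cs_vertices)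
  then show ?thesis
    unfolding graph_iso_def using edges by (intro exI[of _ ?f]) auto
qed

section \<open>Star forms and multipartite forms\<close>

text \<open>
Vertex (i, j) is the j-th vertex of the block U_i. A decorated block i \<in> S keeps only its
distinguished vertex s i as a main vertex; its other vertices are the pendants.
\<close>

definition main_vertex :: "nat set \<Rightarrow> (nat \<Rightarrow> nat) \<Rightarrow> nat \<Rightarrow> nat \<Rightarrow> bool" where
  "main_vertex S s i j \<longleftrightarrow> i \<notin> S \<or> j = s i"

definition star_form :: "nat \<Rightarrow> nat \<Rightarrow> nat \<Rightarrow> nat set \<Rightarrow> (nat \<Rightarrow> nat) \<Rightarrow> ((nat \<times> nat) \<times> (nat \<times> nat)) set" where
  "star_form k n r S s = {((i, j), (i', j')).
     i \<in> {1..k} \<and> j < n \<and> i' \<in> {1..k} \<and> j' < n \<and> (i, j) \<noteq> (i', j') \<and>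
     (if i = i' then (if i = r then even (card S) else i \<in> S \<longrightarrow> j = s i \<or> j' = s i)
      else (i = r \<and> main_vertex S s i' j') \<or> (i' = r \<and> main_vertex S s i j))}"

definition multipartite_form :: "nat \<Rightarrow> nat \<Rightarrow> nat set \<Rightarrow> (nat \<Rightarrow> nat) \<Rightarrow> ((nat \<times> nat) \<times> (nat \<times> nat)) set" where
  "multipartite_form k n D s = {((i, j), (i', j')).
     i \<in> {1..k} \<and> j < n \<and> i' \<in> {1..k} \<and> j' < n \<and> (i, j) \<noteq> (i', j') \<and>
     (if i = i' then i \<in> D \<and> (j = s i \<or> j' = s i)
      else main_vertex D s i j \<and> main_vertex D s i' j')}"

definition star_forms :: "nat \<Rightarrow> nat \<Rightarrow> ((nat \<times> nat) \<times> (nat \<times> nat)) set set" where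
  "star_forms k n = {star_form k n r S s | r S s. r \<in> {1..k} \<and> S \<subseteq> {1..k} - {r} \<and> (\<forall>i. s i < n)}"

definition multipartite_forms :: "nat \<Rightarrow> nat \<Rightarrow> ((nat \<times> nat) \<times> (nat \<times> nat)) set set" where
  "multipartite_forms k n = {multipartite_form k n D s | D s. D \<subseteq> {1..k} \<and> odd (card D) \<and> (\<forall>i. s i < n)}"

lemma star_formsI:
  "r \<in> {1..k} \<Longrightarrow> S \<subseteq> {1..k} - {r} \<Longrightarrow> \<forall>i. s i < n \<Longrightarrow> star_form k n r S s \<in> star_forms k n"
  unfolding star_forms_def by blast

lemma multipartite_formsI:
  "D \<subseteq> {1..k} \<Longrightarrow> odd (card D) \<Longrightarrow> \<forall>i. s i < n \<Longrightarrow> multipartite_form k n D s \<in> multipartite_forms k n"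
  unfolding multipartite_forms_def by blast

lemma mem_star_form:
  "((i, j), (i', j')) \<in> star_form k n r S s \<longleftrightarrow>
     i \<in> {1..k} \<and> j < n \<and> i' \<in> {1..k} \<and> j' < n \<and> (i, j) \<noteq> (i', j') \<and>
     (if i = i' then (if i = r then even (card S) else i \<in> S \<longrightarrow> j = s i \<or> j' = s i)
      else (i = r \<and> main_vertex S s i' j') \<or> (i' = r \<and> main_vertex S s i j))"
  by (simp add: star_form_def)

lemma mem_multipartite_form:
  "((i, j), (i', j')) \<in> multipartite_form k n D s \<longleftrightarrow>
     i \<in> {1..k} \<and> j < n \<and> i' \<in> {1..k} \<and> j' < n \<and> (i, j) \<noteq> (i', j') \<and>
     (if i = i' then i \<in> D \<and> (j = s i \<or> j' = s i)
      else main_vertex D s i j \<and> main_vertex D s i' j')"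
  by (simp add: multipartite_form_def)

lemma star_form_subset: "star_form k n r S s \<subseteq> cs_vertices k (\<lambda>_. n) \<times> cs_vertices k (\<lambda>_. n)"
  by (auto simp: star_form_def)

lemma multipartite_form_subset: "multipartite_form k n D s \<subseteq> cs_vertices k (\<lambda>_. n) \<times> cs_vertices k (\<lambda>_. n)"
  by (auto simp: multipartite_form_def)

lemma pair_pair_set_eqI:
  "(\<And>i j i' j'. ((i, j), (i', j')) \<in> A \<longleftrightarrow> ((i, j), (i', j')) \<in> B) \<Longrightarrow> A = B"
  by (intro set_eqI) (metis prod.collapse)

lemma clique_star_eq_star_form: "clique_star k (\<lambda>_. n) r = star_form k n r {} s"
  by (intro pair_pair_set_eqI) (auto simp: clique_star_def mem_star_form main_vertex_def)

lemma neighbours_star_form_leaf: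
  assumes "i \<in> S" "r \<notin> S" "j \<noteq> s i"
  shows "neighbours (star_form k n r S s) (i, j) \<subseteq> {(i, s i)}"
  using assms by (auto simp: neighbours_def mem_star_form main_vertex_def split: if_splits)

lemma neighbours_multipartite_form_leaf:
  assumes "i \<in> D" "j \<noteq> s i"
  shows "neighbours (multipartite_form k n D s) (i, j) \<subseteq> {(i, s i)}"
  using assms by (auto simp: neighbours_def mem_multipartite_form main_vertex_def split: if_splits)

lemma local_complement_star_form_centre_even:
  assumes "r \<in> {1..k}" "t < n" "finite S" "r \<notin> S" "even (card S)"
  shows "local_complement (r, t) (star_form k n r S s) = multipartite_form k n (insert r S) (s(r := t))"
  using assms
  by (intro pair_pair_set_eqI) (auto simp: mem_local_complement mem_star_form mem_multipartite_form main_vertex_def)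

lemma local_complement_star_form_centre_odd:
  assumes "r \<in> {1..k}" "t < n" "finite S" "r \<notin> S" "odd (card S)"
  shows "local_complement (r, t) (star_form k n r S s) = multipartite_form k n S s"
  using assms
  by (intro pair_pair_set_eqI) (auto simp: mem_local_complement mem_star_form mem_multipartite_form main_vertex_def)

lemma local_complement_star_form_support:
  assumes "i \<in> S" "finite S" "r \<notin> S" "s i < n" "i \<in> {1..k}"
  shows "local_complement (i, s i) (star_form k n r S s) = star_form k n r (S - {i}) s"
proof (intro pair_pair_set_eqI)
  fix a b a' b'
  have parity: "even (card (S - {i})) \<longleftrightarrow> odd (card S)"
    using assms card_Suc_Diff1[of S i] by (metis even_Suc)
  have main: "main_vertex (S - {i}) s x y \<longleftrightarrow> (if x = i then True else main_vertex S s x y)" for x y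
    by (auto simp: main_vertex_def)
  have "i \<noteq> r"
    using assms by auto
  then show "((a, b), (a', b')) \<in> local_complement (i, s i) (star_form k n r S s) \<longleftrightarrow>
      ((a, b), (a', b')) \<in> star_form k n r (S - {i}) s"
    using assms parity by (cases "a = i"; cases "a' = i"; cases "a = r"; cases "a' = r")
      (auto simp: mem_local_complement mem_star_form main main_vertex_def)
qed

lemma local_complement_star_form_undecorated:
  assumes "i \<notin> S" "i \<noteq> r" "finite S" "r \<notin> S" "j < n" "i \<in> {1..k}"
  shows "local_complement (i, j) (star_form k n r S s) = star_form k n r (insert i S) (s(i := j))"
proof (intro pair_pair_set_eqI)
  fix a b a' b'
  have parity: "even (card (insert i S)) \<longleftrightarrow> odd (card S)"
    using assms by simp
  have main: "main_vertex (insert i S) (s(i := j)) x y \<longleftrightarrow> (if x = i then y = j else main_vertex S s x y)"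
    for x y using assms by (auto simp: main_vertex_def)
  have main_i: "main_vertex S s i y" for y
    using assms by (simp add: main_vertex_def)
  show "((a, b), (a', b')) \<in> local_complement (i, j) (star_form k n r S s) \<longleftrightarrow>
      ((a, b), (a', b')) \<in> star_form k n r (insert i S) (s(i := j))"
    using assms parity main_i by (cases "a = i"; cases "a' = i"; cases "a = r"; cases "a' = r")
      (auto simp: mem_local_complement mem_star_form main)
qed

lemma local_complement_multipartite_form_support:
  assumes "i \<in> D" "finite D" "odd (card D)" "s i < n" "i \<in> {1..k}"
  shows "local_complement (i, s i) (multipartite_form k n D s) = star_form k n i (D - {i}) s"
proof (intro pair_pair_set_eqI)
  fix a b a' b'
  have parity: "even (card (D - {i}))"
    using assms card_Suc_Diff1[of D i] by (metis even_Suc)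
  have main: "main_vertex (D - {i}) s x y \<longleftrightarrow> (if x = i then True else main_vertex D s x y)" for x y
    by (auto simp: main_vertex_def)
  show "((a, b), (a', b')) \<in> local_complement (i, s i) (multipartite_form k n D s) \<longleftrightarrow>
      ((a, b), (a', b')) \<in> star_form k n i (D - {i}) s"
    using assms parity by (cases "a = i"; cases "a' = i")
      (auto simp: mem_local_complement mem_star_form mem_multipartite_form main main_vertex_def)
qed

lemma local_complement_multipartite_form_undecorated:
  assumes "i \<notin> D" "finite D" "odd (card D)" "j < n" "i \<in> {1..k}"
  shows "local_complement (i, j) (multipartite_form k n D s) = star_form k n i D s"
  using assms
  by (intro pair_pair_set_eqI) (auto simp: mem_local_complement mem_star_form mem_multipartite_form main_vertex_def)

section \<open>The LC orbit of the clique-star\<close>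

lemma local_complement_star_form_mem:
  assumes "E \<in> star_forms k n" "v \<in> cs_vertices k (\<lambda>_. n)"
  shows "local_complement v E \<in> star_forms k n \<union> multipartite_forms k n"
proof -
  obtain r S s where E: "E = star_form k n r S s"
    and r: "r \<in> {1..k}" and S: "S \<subseteq> {1..k} - {r}" and s: "\<forall>i. s i < n"
    using assms(1) unfolding star_forms_def by blast
  obtain i j where v: "v = (i, j)" and i: "i \<in> {1..k}" and j: "j < n"
    using assms(2) by (cases v) auto
  have fin: "finite S" and rS: "r \<notin> S"
    using S finite_subset by auto
  consider "i = r" "even (card S)" | "i = r" "odd (card S)" | "i \<noteq> r" "i \<in> S" "j = s i"
    | "i \<noteq> r" "i \<in> S" "j \<noteq> s i" | "i \<noteq> r" "i \<notin> S"
    by blast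
  then show ?thesis
  proof cases
    case 1
    then show ?thesis
      using local_complement_star_form_centre_even[OF r j fin rS] r S s j fin rS
      by (auto simp: E v intro!: multipartite_formsI)
  next
    case 2
    then show ?thesis
      using local_complement_star_form_centre_odd[OF r j fin rS] S s
      by (auto simp: E v intro!: multipartite_formsI)
  next
    case 3
    then show ?thesis
      using local_complement_star_form_support[OF _ fin rS _ i] r S s
      by (auto simp: E v intro!: star_formsI)
  next
    case 4
    then show ?thesis
      using local_complement_eq_self[OF neighbours_star_form_leaf[OF _ rS]] assms(1)
      by (simp add: E v)
  next
    case 5
    then show ?thesis
      using local_complement_star_form_undecorated[OF _ _ fin rS j i] r S s i j
      by (auto simp: E v intro!: star_formsI)
  qed
qed

lemma local_complement_multipartite_form_mem:
  assumes "E \<in> multipartite_forms k n" "v \<in> cs_vertices k (\<lambda>_. n)"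
  shows "local_complement v E \<in> star_forms k n \<union> multipartite_forms k n"
proof -
  obtain D s where E: "E = multipartite_form k n D s"
    and D: "D \<subseteq> {1..k}" and odd: "odd (card D)" and s: "\<forall>i. s i < n"
    using assms(1) unfolding multipartite_forms_def by blast
  obtain i j where v: "v = (i, j)" and i: "i \<in> {1..k}" and j: "j < n"
    using assms(2) by (cases v) auto
  have fin: "finite D"
    using D finite_subset by auto
  consider "i \<in> D" "j = s i" | "i \<in> D" "j \<noteq> s i" | "i \<notin> D"
    by blast
  then show ?thesis
  proof cases
    case 1
    then show ?thesis
      using local_complement_multipartite_form_support[OF _ fin odd _ i] D s i
      by (auto simp: E v intro!: star_formsI)
  next
    case 2
    then show ?thesis
      using local_complement_eq_self[OF neighbours_multipartite_form_leaf] assms(1)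
      by (simp add: E v)
  next
    case 3
    then show ?thesis
      using local_complement_multipartite_form_undecorated[OF _ fin odd j i] D s i
      by (auto simp: E v intro!: star_formsI)
  qed
qed

lemma lc_orbit_clique_star_subset:
  assumes "r \<in> {1..k}" "n > 0"
  shows "lc_orbit (cs_vertices k (\<lambda>_. n)) (clique_star k (\<lambda>_. n) r) \<subseteq> star_forms k n \<union> multipartite_forms k n"
proof
  fix E assume "E \<in> lc_orbit (cs_vertices k (\<lambda>_. n)) (clique_star k (\<lambda>_. n) r)"
  then show "E \<in> star_forms k n \<union> multipartite_forms k n"
  proof induction
    case base
    show ?case
      using assms by (auto simp: clique_star_eq_star_form[where s = "\<lambda>_. 0"] intro!: star_formsI)
  next
    case (step F v)
    then show ?case
      using local_complement_star_form_mem local_complement_multipartite_form_mem by blast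
  qed
qed

lemma star_form_in_lc_orbit:
  assumes "r \<in> {1..k}" "n > 0" "S \<subseteq> {1..k} - {r}"
  shows "star_form k n r S (\<lambda>_. 0) \<in> lc_orbit (cs_vertices k (\<lambda>_. n)) (clique_star k (\<lambda>_. n) r)"
proof -
  have "finite S"
    using assms(3) finite_subset by auto
  then show ?thesis
    using assms(3)
  proof (induction S)
    case empty
    show ?case
      using lc_orbit.base clique_star_eq_star_form by metis
  next
    case (insert i S)
    then have "local_complement (i, 0) (star_form k n r S (\<lambda>_. 0)) = star_form k n r (insert i S) (\<lambda>_. 0)"
      using local_complement_star_form_undecorated[of i S r 0 n k "\<lambda>_. 0"] assms by (auto simp: fun_upd_def)
    moreover have "(i, 0) \<in> cs_vertices k (\<lambda>_. n)"
      using insert.prems assms by auto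
    ultimately show ?case
      using lc_orbit.step insert by (metis insert_subset)
  qed
qed

lemma multipartite_form_in_lc_orbit:
  assumes "r \<in> {1..k}" "n > 0" "S \<subseteq> {1..k} - {r}" "even (card S)"
  shows "multipartite_form k n (insert r S) (\<lambda>_. 0) \<in> lc_orbit (cs_vertices k (\<lambda>_. n)) (clique_star k (\<lambda>_. n) r)"
proof -
  have "local_complement (r, 0) (star_form k n r S (\<lambda>_. 0)) = multipartite_form k n (insert r S) (\<lambda>_. 0)"
    using local_complement_star_form_centre_even[of r k 0 n S "\<lambda>_. 0"] assms finite_subset
    by (auto simp: fun_upd_def)
  then show ?thesis
    using lc_orbit.step[OF star_form_in_lc_orbit[OF assms(1-3)], of "(r, 0)"] assms by auto
qed

section \<open>Isomorphism classes in the orbit\<close>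

lemma card_leaves:
  assumes "finite S" "\<forall>i. s i < n"
  shows "card {(i, j). i \<in> S \<and> j < n \<and> j \<noteq> s i} = card S * (n - 1)"
proof -
  have "{(i, j). i \<in> S \<and> j < n \<and> j \<noteq> s i} = (SIGMA i:S. {..<n} - {s i})"
    by auto
  then show ?thesis
    using assms by (simp add: card_SigmaI)
qed

lemma card_neighbours_star_form_leaf:
  assumes "i \<in> S" "r \<notin> S" "j < n" "j \<noteq> s i" "s i < n" "i \<in> {1..k}"
  shows "card (neighbours (star_form k n r S s) (i, j)) = 1"
proof (rule card_neighbours_eq_1[OF neighbours_star_form_leaf])
  show "((i, j), (i, s i)) \<in> star_form k n r S s"
    using assms by (auto simp: mem_star_form)
qed (use assms in auto)

lemma card_neighbours_star_form_main:
  assumes k: "k \<ge> 3" and n: "n \<ge> 2" and "r \<in> {1..k}" "\<forall>i. s i < n"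
    and "i \<in> {1..k}" "j < n" "main_vertex S s i j"
  shows "card (neighbours (star_form k n r S s) (i, j)) \<noteq> 1"
proof (cases "i = r")
  case True
  obtain c where c: "c \<in> {1..k}" "c \<noteq> r"
    using obtain_third_block[OF k] by metis
  obtain c' where c': "c' \<in> {1..k}" "c' \<noteq> r" "c' \<noteq> c"
    using obtain_third_block[OF k] by metis
  have "((i, j), (c, s c)) \<in> star_form k n r S s" "((i, j), (c', s c')) \<in> star_form k n r S s"
    using True assms c c' by (auto simp: mem_star_form main_vertex_def)
  then show ?thesis
    by (rule card_neighbours_ne_1) (use c' in simp)
next
  case False
  have "((i, j), (r, 0)) \<in> star_form k n r S s" "((i, j), (r, 1)) \<in> star_form k n r S s"
    using False assms by (auto simp: mem_star_form)
  then show ?thesis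
    by (rule card_neighbours_ne_1) simp
qed

lemma card_neighbours_multipartite_form_leaf:
  assumes "i \<in> D" "j < n" "j \<noteq> s i" "s i < n" "i \<in> {1..k}"
  shows "card (neighbours (multipartite_form k n D s) (i, j)) = 1"
proof (rule card_neighbours_eq_1[OF neighbours_multipartite_form_leaf])
  show "((i, j), (i, s i)) \<in> multipartite_form k n D s"
    using assms by (auto simp: mem_multipartite_form)
qed (use assms in auto)

lemma card_neighbours_multipartite_form_main:
  assumes k: "k \<ge> 3" and "\<forall>i. s i < n" and "i \<in> {1..k}" "j < n" "main_vertex D s i j"
  shows "card (neighbours (multipartite_form k n D s) (i, j)) \<noteq> 1"
proof -
  obtain c where c: "c \<in> {1..k}" "c \<noteq> i"
    using obtain_third_block[OF k] by metis
  obtain c' where c': "c' \<in> {1..k}" "c' \<noteq> i" "c' \<noteq> c"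
    using obtain_third_block[OF k] by metis
  have "((i, j), (c, s c)) \<in> multipartite_form k n D s" "((i, j), (c', s c')) \<in> multipartite_form k n D s"
    using assms c c' by (auto simp: mem_multipartite_form main_vertex_def)
  then show ?thesis
    by (rule card_neighbours_ne_1) (use c' in simp)
qed

lemma pendants_star_form:
  assumes k: "k \<ge> 3" and n: "n \<ge> 2" and r: "r \<in> {1..k}" and S: "S \<subseteq> {1..k} - {r}" and s: "\<forall>i. s i < n"
  shows "pendants (cs_vertices k (\<lambda>_. n)) (star_form k n r S s) = {(i, j). i \<in> S \<and> j < n \<and> j \<noteq> s i}"
proof (intro set_eqI)
  fix x :: "nat \<times> nat"
  obtain i j where x: "x = (i, j)"
    by (cases x)
  have "r \<notin> S"
    using S by blast
  then show "x \<in> pendants (cs_vertices k (\<lambda>_. n)) (star_form k n r S s) \<longleftrightarrow> x \<in> {(i, j). i \<in> S \<and> j < n \<and> j \<noteq> s i}"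
    using card_neighbours_star_form_leaf[of i S r j n s k] card_neighbours_star_form_main[OF k n r s, of i j S] S s
    by (auto simp: x pendants_def main_vertex_def)
qed

lemma pendants_multipartite_form:
  assumes k: "k \<ge> 3" and D: "D \<subseteq> {1..k}" and s: "\<forall>i. s i < n"
  shows "pendants (cs_vertices k (\<lambda>_. n)) (multipartite_form k n D s) = {(i, j). i \<in> D \<and> j < n \<and> j \<noteq> s i}"
proof (intro set_eqI)
  fix x :: "nat \<times> nat"
  obtain i j where x: "x = (i, j)"
    by (cases x)
  show "x \<in> pendants (cs_vertices k (\<lambda>_. n)) (multipartite_form k n D s) \<longleftrightarrow> x \<in> {(i, j). i \<in> D \<and> j < n \<and> j \<noteq> s i}"
    using card_neighbours_multipartite_form_leaf[of i D j n s k] card_neighbours_multipartite_form_main[OF k s, of i j D] D s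
    by (auto simp: x pendants_def main_vertex_def)
qed

lemma pendant_signature_star_form:
  assumes k: "k \<ge> 3" and n: "n \<ge> 2" and r: "r \<in> {1..k}" and S: "S \<subseteq> {1..k} - {r}" and s: "\<forall>i. s i < n"
  shows "pendant_signature (cs_vertices k (\<lambda>_. n)) (star_form k n r S s) = (False, card S * (n - 1))"
proof -
  let ?V = "cs_vertices k (\<lambda>_. n)" and ?E = "star_form k n r S s"
  note leaves = pendants_star_form[OF k n r S s]
  have "\<not> is_dominating_support ?V ?E x" for x
  proof
    assume "is_dominating_support ?V ?E x"
    then obtain i j where z: "i \<in> S" "j \<noteq> s i" "(x, (i, j)) \<in> ?E"
      and adjacent: "\<forall>y\<in>?V - pendants ?V ?E. y \<noteq> x \<longrightarrow> (x, y) \<in> ?E"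
      unfolding is_dominating_support_def leaves by auto
    then have x: "x = (i, s i)"
      using S by (cases x) (auto simp: mem_star_form main_vertex_def split: if_splits)
    obtain c where c: "c \<in> {1..k}" "c \<noteq> i" "c \<noteq> r"
      using obtain_third_block[OF k] by metis
    have "(c, s c) \<in> ?V - pendants ?V ?E" "(c, s c) \<noteq> x"
      using c s x unfolding leaves by auto
    moreover have "(x, (c, s c)) \<notin> ?E"
      using x c z S by (auto simp: mem_star_form)
    ultimately show False
      using adjacent by blast
  qed
  moreover have "card (pendants ?V ?E) = card S * (n - 1)"
    unfolding leaves by (intro card_leaves s finite_subset[OF S]) simp
  ultimately show ?thesis
    by (simp add: pendant_signature_def)
qed

lemma pendant_signature_multipartite_form:
  assumes k: "k \<ge> 3" and n: "n \<ge> 2" and D: "D \<subseteq> {1..k}" and odd: "odd (card D)" and s: "\<forall>i. s i < n"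
  shows "pendant_signature (cs_vertices k (\<lambda>_. n)) (multipartite_form k n D s) = (True, card D * (n - 1))"
proof -
  let ?V = "cs_vertices k (\<lambda>_. n)" and ?E = "multipartite_form k n D s"
  note leaves = pendants_multipartite_form[OF k D s]
  obtain d where d: "d \<in> D"
    using odd by (metis card.empty ex_in_conv odd_pos less_irrefl)
  then have "d \<in> {1..k}"
    using D by blast
  define j :: nat where "j = (if s d = 0 then 1 else 0)"
  have "(d, j) \<in> pendants ?V ?E" "((d, s d), (d, j)) \<in> ?E"
    using n s d D unfolding leaves j_def by (auto simp: mem_multipartite_form)
  moreover have "((d, s d), y) \<in> ?E" if "y \<in> ?V - pendants ?V ?E" "y \<noteq> (d, s d)" for y
    using that s d \<open>d \<in> {1..k}\<close> unfolding leaves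
    by (cases y) (auto simp: mem_multipartite_form main_vertex_def)
  ultimately have "is_dominating_support ?V ?E (d, s d)"
    unfolding is_dominating_support_def by blast
  moreover have "(d, s d) \<in> ?V"
    using d D s by auto
  moreover have "card (pendants ?V ?E) = card D * (n - 1)"
    unfolding leaves by (intro card_leaves s finite_subset[OF D]) simp
  ultimately show ?thesis
    by (auto simp: pendant_signature_def)
qed

lemma star_form_graph_iso:
  assumes r: "r \<in> {1..k}" and S: "S \<subseteq> {1..k} - {r}" and s: "\<forall>i. s i < n"
    and r': "r' \<in> {1..k}" and S': "S' \<subseteq> {1..k} - {r'}" and s': "\<forall>i. s' i < n"
    and card: "card S = card S'"
  shows "graph_iso (cs_vertices k (\<lambda>_. n)) (star_form k n r S s) (star_form k n r' S' s')"
proof -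
  obtain \<rho> where \<rho>: "bij_betw \<rho> {1..k} {1..k}" and "\<rho> r = r'" and "\<rho> ` S = S'"
    by (rule obtain_bij_betw_point_image_eq[of "{1..k}" "{1..k}" r r' S S']) (use assms in auto)
  have \<rho>_inj: "\<rho> i = \<rho> i' \<longleftrightarrow> i = i'" if "i \<in> {1..k}" "i' \<in> {1..k}" for i i'
    using bij_betw_imp_inj_on[OF \<rho>] that by (rule inj_on_eq_iff)
  have \<rho>_r: "\<rho> i = r' \<longleftrightarrow> i = r" if "i \<in> {1..k}" for i
    using \<rho>_inj[OF that r] \<open>\<rho> r = r'\<close> by simp
  have \<rho>_S: "\<rho> i \<in> S' \<longleftrightarrow> i \<in> S" if "i \<in> {1..k}" for i
    using inj_on_image_mem_iff[OF bij_betw_imp_inj_on[OF \<rho>] that] S \<open>\<rho> ` S = S'\<close> by blast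
  define \<sigma> where "\<sigma> i = transpose (s i) (s' (\<rho> i))" for i
  have \<sigma>_s: "\<sigma> i j = s' (\<rho> i) \<longleftrightarrow> j = s i" for i j
    by (auto simp: \<sigma>_def transpose_def)
  have main: "main_vertex S' s' (\<rho> i) (\<sigma> i j) \<longleftrightarrow> main_vertex S s i j" if "i \<in> {1..k}" for i j
    using \<rho>_S[OF that] \<sigma>_s by (simp add: main_vertex_def)
  have \<rho>_k: "\<rho> i \<in> {1..k}" if "i \<in> {1..k}" for i
    using \<rho> that by (rule bij_betwE[rule_format])
  have \<sigma>_less: "\<sigma> i j < n" if "j < n" for i j
    using that s s' by (simp add: \<sigma>_def transpose_less)
  have \<sigma>_inj: "inj (\<sigma> i)" for i
    by (simp add: \<sigma>_def inj_transpose)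
  show ?thesis
  proof (rule graph_iso_blockwise[OF \<rho> \<sigma>_inj \<sigma>_less])
    show "((i, j), (i', j')) \<in> star_form k n r S s \<longleftrightarrow> ((\<rho> i, \<sigma> i j), (\<rho> i', \<sigma> i' j')) \<in> star_form k n r' S' s'"
      if "i \<in> {1..k}" "j < n" "i' \<in> {1..k}" "j' < n" for i j i' j'
      using that \<rho>_k \<rho>_inj \<rho>_r \<rho>_S main card \<sigma>_s \<sigma>_less
      by (cases "i = i'") (auto simp: mem_star_form inj_eq[OF \<sigma>_inj])
  qed
qed

lemma multipartite_form_graph_iso:
  assumes D: "D \<subseteq> {1..k}" and s: "\<forall>i. s i < n" and D': "D' \<subseteq> {1..k}" and s': "\<forall>i. s' i < n"
    and card: "card D = card D'"
  shows "graph_iso (cs_vertices k (\<lambda>_. n)) (multipartite_form k n D s) (multipartite_form k n D' s')"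
proof -
  obtain \<rho> where \<rho>: "bij_betw \<rho> {1..k} {1..k}" and \<rho>D: "\<rho> ` D = D'"
    using obtain_bij_betw_image_eq[of "{1..k}" "{1..k}" D D'] D D' card by auto
  have \<rho>_inj: "\<rho> i = \<rho> i' \<longleftrightarrow> i = i'" if "i \<in> {1..k}" "i' \<in> {1..k}" for i i'
    using bij_betw_imp_inj_on[OF \<rho>] that by (rule inj_on_eq_iff)
  have \<rho>_D: "\<rho> i \<in> D' \<longleftrightarrow> i \<in> D" if "i \<in> {1..k}" for i
    using inj_on_image_mem_iff[OF bij_betw_imp_inj_on[OF \<rho>] that] D \<rho>D by blast
  have \<rho>_k: "\<rho> i \<in> {1..k}" if "i \<in> {1..k}" for i
    using \<rho> that by (rule bij_betwE[rule_format])
  define \<sigma> where "\<sigma> i = transpose (s i) (s' (\<rho> i))" for i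
  have \<sigma>_s: "\<sigma> i j = s' (\<rho> i) \<longleftrightarrow> j = s i" for i j
    by (auto simp: \<sigma>_def transpose_def)
  have main: "main_vertex D' s' (\<rho> i) (\<sigma> i j) \<longleftrightarrow> main_vertex D s i j" if "i \<in> {1..k}" for i j
    using \<rho>_D[OF that] \<sigma>_s by (simp add: main_vertex_def)
  have \<sigma>_less: "\<sigma> i j < n" if "j < n" for i j
    using that s s' by (simp add: \<sigma>_def transpose_less)
  have \<sigma>_inj: "inj (\<sigma> i)" for i
    by (simp add: \<sigma>_def inj_transpose)
  show ?thesis
  proof (rule graph_iso_blockwise[OF \<rho> \<sigma>_inj \<sigma>_less])
    show "((i, j), (i', j')) \<in> multipartite_form k n D s \<longleftrightarrow>
        ((\<rho> i, \<sigma> i j), (\<rho> i', \<sigma> i' j')) \<in> multipartite_form k n D' s'"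
      if "i \<in> {1..k}" "j < n" "i' \<in> {1..k}" "j' < n" for i j i' j'
      using that \<rho>_k \<rho>_inj \<rho>_D main \<sigma>_s \<sigma>_less
      by (cases "i = i'") (auto simp: mem_multipartite_form inj_eq[OF \<sigma>_inj])
  qed
qed

lemma graph_iso_iff_pendant_signature_eq:
  assumes k: "k \<ge> 3" and n: "n \<ge> 2"
    and E: "E \<in> star_forms k n \<union> multipartite_forms k n" and F: "F \<in> star_forms k n \<union> multipartite_forms k n"
  shows "graph_iso (cs_vertices k (\<lambda>_. n)) E F \<longleftrightarrow>
    pendant_signature (cs_vertices k (\<lambda>_. n)) E = pendant_signature (cs_vertices k (\<lambda>_. n)) F"
proof
  have "G \<subseteq> cs_vertices k (\<lambda>_. n) \<times> cs_vertices k (\<lambda>_. n)" if "G \<in> star_forms k n \<union> multipartite_forms k n" for G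
    using that star_form_subset multipartite_form_subset unfolding star_forms_def multipartite_forms_def by blast
  then show "graph_iso (cs_vertices k (\<lambda>_. n)) E F \<Longrightarrow>
      pendant_signature (cs_vertices k (\<lambda>_. n)) E = pendant_signature (cs_vertices k (\<lambda>_. n)) F"
    using graph_iso_pendant_signature E F by blast
next
  have n1: "n - 1 > 0"
    using n by simp
  assume "pendant_signature (cs_vertices k (\<lambda>_. n)) E = pendant_signature (cs_vertices k (\<lambda>_. n)) F"
  with E F show "graph_iso (cs_vertices k (\<lambda>_. n)) E F"
    using n1 pendant_signature_star_form[OF k n] pendant_signature_multipartite_form[OF k n]
      star_form_graph_iso multipartite_form_graph_iso
    by (auto simp: star_forms_def multipartite_forms_def)
qed

lemma pendant_signature_mem_forms:
  assumes k: "k \<ge> 3" and n: "n \<ge> 2" and E: "E \<in> star_forms k n \<union> multipartite_forms k n"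
  shows "pendant_signature (cs_vertices k (\<lambda>_. n)) E \<in>
    (\<lambda>m. (False, m * (n - 1))) ` {..<k} \<union> (\<lambda>m. (True, m * (n - 1))) ` {m. m \<le> k \<and> odd m}"
  using E
proof
  assume "E \<in> star_forms k n"
  then obtain r S s where E: "E = star_form k n r S s"
    and r: "r \<in> {1..k}" and S: "S \<subseteq> {1..k} - {r}" and s: "\<forall>i. s i < n"
    unfolding star_forms_def by blast
  have "card S \<le> card ({1..k} - {r})"
    using S by (intro card_mono) auto
  then have "card S < k"
    using r k by simp
  then show ?thesis
    using pendant_signature_star_form[OF k n r S s] by (force simp: E)
next
  assume "E \<in> multipartite_forms k n"
  then obtain D s where E: "E = multipartite_form k n D s"
    and D: "D \<subseteq> {1..k}" and odd: "odd (card D)" and s: "\<forall>i. s i < n"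
    unfolding multipartite_forms_def by blast
  have "card D \<le> k"
    using card_mono[OF _ D] by simp
  then show ?thesis
    using pendant_signature_multipartite_form[OF k n D odd s] odd by (force simp: E)
qed

lemma pendant_signatures_lc_orbit_clique_star_supset:
  assumes k: "k \<ge> 3" and n: "n \<ge> 2" and r: "r \<in> {1..k}"
  shows "(\<lambda>m. (False, m * (n - 1))) ` {..<k} \<union> (\<lambda>m. (True, m * (n - 1))) ` {m. m \<le> k \<and> odd m} \<subseteq>
    pendant_signature (cs_vertices k (\<lambda>_. n)) ` lc_orbit (cs_vertices k (\<lambda>_. n)) (clique_star k (\<lambda>_. n) r)"
    (is "?L \<subseteq> ?sig ` ?O")
proof
  fix x assume "x \<in> ?L"
  then consider m where "m < k" "x = (False, m * (n - 1))"
    | m where "m \<le> k" "odd m" "x = (True, m * (n - 1))"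
    by blast
  then show "x \<in> ?sig ` ?O"
  proof cases
    case (1 m)
    then have "m \<le> card ({1..k} - {r})"
      using r by simp
    then obtain S where S: "S \<subseteq> {1..k} - {r}" "card S = m"
      by (rule obtain_subset_with_card_n)
    then have "?sig (star_form k n r S (\<lambda>_. 0)) = x"
      using pendant_signature_star_form[OF k n r S(1)] n 1 by simp
    then show ?thesis
      using star_form_in_lc_orbit[OF r _ S(1)] n by force
  next
    case (2 m)
    then have "m - 1 \<le> card ({1..k} - {r})"
      using r by simp
    then obtain S where S: "S \<subseteq> {1..k} - {r}" "card S = m - 1"
      by (rule obtain_subset_with_card_n)
    have "finite S" "r \<notin> S"
      using S(1) finite_subset by auto
    then have D: "insert r S \<subseteq> {1..k}" "card (insert r S) = m"
      using S r 2 odd_pos[of m] by auto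
    have "even (card S)"
      using S(2) 2 by (simp add: odd_pos)
    moreover have "?sig (multipartite_form k n (insert r S) (\<lambda>_. 0)) = x"
      using pendant_signature_multipartite_form[OF k n D(1)] D(2) n 2 by simp
    ultimately show ?thesis
      using multipartite_form_in_lc_orbit[OF r _ S(1)] n by force
  qed
qed

lemma card_odd_atMost: "card {m::nat. m \<le> k \<and> odd m} = (k + 1) div 2"
proof -
  have "{m::nat. m \<le> k \<and> odd m} = (\<lambda>i. 2 * i + 1) ` {..<(k + 1) div 2}"
  proof (intro set_eqI iffI)
    fix m assume "m \<in> {m. m \<le> k \<and> odd m}"
    then have "m = 2 * (m div 2) + 1" "m div 2 < (k + 1) div 2"
      by auto presburger+
    then show "m \<in> (\<lambda>i. 2 * i + 1) ` {..<(k + 1) div 2}"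
      by blast
  qed auto
  then show ?thesis
    by (simp add: card_image inj_on_def)
qed

theorem theorem16:
  fixes k n r :: nat
  assumes "k \<ge> 3" and "n \<ge> 2" and "r \<in> {1..k}"
  shows "num_iso_classes (cs_vertices k (\<lambda>_. n))
           (lc_orbit (cs_vertices k (\<lambda>_. n)) (clique_star k (\<lambda>_. n) r))
         = (k + 1) div 2 + k"
proof -
  let ?V = "cs_vertices k (\<lambda>_. n)"
  let ?O = "lc_orbit ?V (clique_star k (\<lambda>_. n) r)"
  let ?L = "(\<lambda>m. (False, m * (n - 1))) ` {..<k} \<union> (\<lambda>m. (True, m * (n - 1))) ` {m. m \<le> k \<and> odd m}"
  have forms: "?O \<subseteq> star_forms k n \<union> multipartite_forms k n"
    using lc_orbit_clique_star_subset assms by simp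
  then have "num_iso_classes ?V ?O = card (pendant_signature ?V ` ?O)"
    unfolding num_iso_classes_def
    by (intro card_quotient_eq_card_image graph_iso_iff_pendant_signature_eq assms(1,2)) auto
  also have "pendant_signature ?V ` ?O = ?L"
    using forms pendant_signature_mem_forms[OF assms(1,2)] pendant_signatures_lc_orbit_clique_star_supset[OF assms]
    by blast
  also have "card ?L = k + (k + 1) div 2"
    using assms(2) by (subst card_Un_disjoint) (auto simp: card_image inj_on_def card_odd_atMost)
  finally show ?thesis
    by simp
qed

end
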